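(* Let $n\ge3$ and $0<q<1$. For every relationship network $G$ on $V$ in which at least one of the three relation types is entirely absent (i.e. $\bigcup_{i}E_i=\varnothing$, or $\bigcup_iF_i=\varnothing$, or $\bigcup_iI_i=\varnothing$), the duples mechanism selects a needy agent with probability strictly greater than $q$: $P_D(G)>q$.
   Context: Let $V=\{1,\dots,n\}$. A relationship network $G$ assigns to every unordered pair of distinct agents exactly one of the symmetric relations friends, enemies, impartial; $F_j,E_j,I_j$ are the friends, enemies, impartials of $j$. Each agent is needy independently with probability $q$; $N$ is the random needy set; every agent $j$ reports truthfully $(N,F_j,E_j)$. Duples mechanism $g^D$: for agent $l$ and $j\ne l$, $\mathrm{lev}_l(j)=1,\dots,6$ according as $j\in F_l\cap N$, $F_l\setminus N$, $I_l\cap N$, $I_l\setminus N$, $E_l\cap N$, $E_l\setminus N$. For distinct $j,k$, agent $l\notin\{j,k\}$ votes for $j$ against $k$ if $\mathrm{lev}_l(j)<\mathrm{lev}_l(k)$ (abstains if equal); $x_{jk}$ counts these votes. $g^D_j(\{j,k\})=1,\tfrac12,0$ as $x_{jk}>,=,<x_{kj}$, $g^D_k(\{j,k\})=1-g^D_j(\{j,k\})$, and $g^D_i=\frac{2}{n(n-1)}\sum_{j\ne i}g^D_i(\{i,j\})$. $P_D(G)=\mathbb E[\sum_{i\in N}g^D_i]$ under truthful reports. *)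

theory Defs
  imports Complex_Main
begin

datatype relation = Friends | Enemies | Impartial

text \<open>A relationship network on V = {1..n}: a function G with G i j the relation
  between distinct agents i and j; it must be symmetric. Values on the diagonal are irrelevant.\<close>
definition network :: "nat \<Rightarrow> (nat \<Rightarrow> nat \<Rightarrow> relation) \<Rightarrow> bool" where
  "network n G \<longleftrightarrow> (\<forall>i\<in>{1..n}. \<forall>j\<in>{1..n}. i \<noteq> j \<longrightarrow> G i j = G j i)"

definition friends :: "nat \<Rightarrow> (nat \<Rightarrow> nat \<Rightarrow> relation) \<Rightarrow> nat \<Rightarrow> nat set" where
  "friends n G j = {k \<in> {1..n}. k \<noteq> j \<and> G j k = Friends}"
definition enemies :: "nat \<Rightarrow> (nat \<Rightarrow> nat \<Rightarrow> relation) \<Rightarrow> nat \<Rightarrow> nat set" where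
  "enemies n G j = {k \<in> {1..n}. k \<noteq> j \<and> G j k = Enemies}"
definition impartials :: "nat \<Rightarrow> (nat \<Rightarrow> nat \<Rightarrow> relation) \<Rightarrow> nat \<Rightarrow> nat set" where
  "impartials n G j = {k \<in> {1..n}. k \<noteq> j \<and> G j k = Impartial}"

definition lev :: "nat \<Rightarrow> (nat \<Rightarrow> nat \<Rightarrow> relation) \<Rightarrow> nat set \<Rightarrow> nat \<Rightarrow> nat \<Rightarrow> nat" where
  "lev n G N l j =
     (if j \<in> friends n G l \<inter> N then 1
      else if j \<in> friends n G l - N then 2
      else if j \<in> impartials n G l \<inter> N then 3
      else if j \<in> impartials n G l - N then 4
      else if j \<in> enemies n G l \<inter> N then 5
      else 6)"

definition votes :: "nat \<Rightarrow> (nat \<Rightarrow> nat \<Rightarrow> relation) \<Rightarrow> nat set \<Rightarrow> nat \<Rightarrow> nat \<Rightarrow> nat" where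
  "votes n G N j k = card {l \<in> {1..n}. l \<noteq> j \<and> l \<noteq> k \<and> lev n G N l j < lev n G N l k}"

definition gpair :: "nat \<Rightarrow> (nat \<Rightarrow> nat \<Rightarrow> relation) \<Rightarrow> nat set \<Rightarrow> nat \<Rightarrow> nat \<Rightarrow> real" where
  "gpair n G N j k =
     (if votes n G N j k > votes n G N k j then 1
      else if votes n G N j k = votes n G N k j then 1/2 else 0)"

definition gD :: "nat \<Rightarrow> (nat \<Rightarrow> nat \<Rightarrow> relation) \<Rightarrow> nat set \<Rightarrow> nat \<Rightarrow> real" where
  "gD n G N i = 2 / (real n * (real n - 1)) * (\<Sum>j\<in>{1..n} - {i}. gpair n G N i j)"

text \<open>Expected probability of selecting a needy agent, each agent needy independently with prob. q.\<close>
definition PD :: "nat \<Rightarrow> real \<Rightarrow> (nat \<Rightarrow> nat \<Rightarrow> relation) \<Rightarrow> real" where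
  "PD n q G = (\<Sum>N\<in>Pow {1..n}. q ^ card N * (1 - q) ^ (n - card N) * (\<Sum>i\<in>N. gD n G N i))"

end

(*
  When one relation type is absent, every voter l splits the other agents into a favoured and
  an unfavoured class, and lev orders first by class and then by neediness.  So in a duel between
  a needy i and a non-needy j, l votes for j exactly when it favours j but not i: the outcome
  phi i j of such a duel does not depend on the needy set, while any two agents' duel scores
  against each other add up to 1.  Averaging over the needy set gives
    P_D = q + 2 q (1 - q) / (n (n - 1)) * sum over i ~= j of (phi i j - 1/2).
  Each unordered pair contributes phi i j + phi j i - 1 >= 0, and strictly more when it is
  balanced: neither agent is backed against the other by a strict majority of the remaining
  voters, and some voter treats both alike.  A balanced pair always exists.  Two agents whose net
  support (supporters minus non-supporters) has the same sign are never majority-backed against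
  each other; for odd n, pigeonhole on four agents and parity finish the argument, and for even n
  three agents of equal sign form a triangle in which one of them treats the other two alike.
*)
theory Submission
  imports Defs
begin

section \<open>Expected selection probability\<close>

definition duel :: "nat \<Rightarrow> nat \<Rightarrow> real" where
  "duel x y = (if y < x then 1 else if x = y then 1/2 else 0)"

lemma gpair_eq_duel: "gpair n G N j k = duel (votes n G N j k) (votes n G N k j)"
  by (simp add: gpair_def duel_def)

lemma duel_add_swap: "duel x y + duel y x = 1"
  by (simp add: duel_def)

lemma gpair_add_swap: "gpair n G N j k + gpair n G N k j = 1"
  by (simp add: gpair_eq_duel duel_add_swap)

lemma duel_pair_ge: "x + y \<le> m \<Longrightarrow> 1 \<le> duel (m - y) y + duel (m - x) x"
  by (auto simp: duel_def)

lemma duel_pair_gt: "x + y < m \<Longrightarrow> 2 * x \<le> m \<Longrightarrow> 2 * y \<le> m \<Longrightarrow> 1 < duel (m - y) y + duel (m - x) x"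
  by (auto simp: duel_def)

lemma sum_offdiag_swap:
  assumes "finite A"
  shows "(\<Sum>i\<in>A. \<Sum>j\<in>A - {i}. f i j) = (\<Sum>i\<in>A. \<Sum>j\<in>A - {i}. f j i)"
proof -
  have "{j. j \<in> A \<and> j \<noteq> i} = A - {i}" "{j. j \<in> A \<and> i \<noteq> j} = A - {i}" for i
    by blast+
  then show ?thesis
    using sum.swap_restrict[OF assms assms, of f "\<lambda>i j. j \<noteq> i"] by simp
qed

lemma sum_offdiag_antisym:
  fixes d :: "'a \<Rightarrow> 'a \<Rightarrow> real"
  assumes "finite A" "\<And>i j. i \<in> A \<Longrightarrow> j \<in> A \<Longrightarrow> d j i = - d i j"
  shows "(\<Sum>i\<in>A. \<Sum>j\<in>A - {i}. d i j) = 0"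
proof -
  have "(\<Sum>i\<in>A. \<Sum>j\<in>A - {i}. d i j) = (\<Sum>i\<in>A. \<Sum>j\<in>A - {i}. d j i)"
    using assms(1) by (rule sum_offdiag_swap)
  also have "\<dots> = (\<Sum>i\<in>A. \<Sum>j\<in>A - {i}. - d i j)"
    by (intro sum.cong refl) (metis DiffD1 assms(2))
  also have "\<dots> = - (\<Sum>i\<in>A. \<Sum>j\<in>A - {i}. d i j)"
    by (simp add: sum_negf)
  finally show ?thesis
    by simp
qed

lemma sum_offdiag_pos:
  fixes t :: "'a \<Rightarrow> 'a \<Rightarrow> real"
  assumes "finite A" "\<And>i j. i \<in> A \<Longrightarrow> j \<in> A \<Longrightarrow> i \<noteq> j \<Longrightarrow> 0 \<le> t i j + t j i"
    and "i0 \<in> A" "j0 \<in> A" "i0 \<noteq> j0" "0 < t i0 j0 + t j0 i0"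
  shows "0 < (\<Sum>i\<in>A. \<Sum>j\<in>A - {i}. t i j)"
proof -
  have row_nonneg: "0 \<le> (\<Sum>j\<in>A - {i}. t i j + t j i)" if "i \<in> A" for i
  proof (rule sum_nonneg)
    show "0 \<le> t i j + t j i" if "j \<in> A - {i}" for j
      using assms(2) \<open>i \<in> A\<close> that by blast
  qed
  have row_pos: "0 < (\<Sum>j\<in>A - {i0}. t i0 j + t j i0)"
  proof (rule sum_pos2[where i = j0])
    show "finite (A - {i0})" "j0 \<in> A - {i0}"
      using assms(1,4,5) by auto
    show "0 < t i0 j0 + t j0 i0"
      by (rule assms(6))
    show "0 \<le> t i0 j + t j i0" if "j \<in> A - {i0}" for j
      using assms(2,3) that by blast
  qed
  have "0 < (\<Sum>i\<in>A. \<Sum>j\<in>A - {i}. t i j + t j i)"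
    using assms(1,3) row_pos row_nonneg by (rule sum_pos2)
  also have "\<dots> = 2 * (\<Sum>i\<in>A. \<Sum>j\<in>A - {i}. t i j)"
    using sum_offdiag_swap[OF assms(1), of t] by (simp add: sum.distrib)
  finally show ?thesis
    by simp
qed

lemma sum_needy_scores_eq:
  fixes g phi :: "'a \<Rightarrow> 'a \<Rightarrow> real"
  assumes "finite V" "N \<subseteq> V"
    and "\<And>i j. g i j + g j i = 1"
    and "\<And>i j. i \<in> N \<Longrightarrow> j \<in> V - N \<Longrightarrow> g i j = phi i j"
  shows "(\<Sum>i\<in>N. \<Sum>j\<in>V - {i}. g i j)
    = real (card N) * (real (card V) - 1) / 2 + (\<Sum>i\<in>N. \<Sum>j\<in>V - N. phi i j - 1/2)"
proof -
  have "finite N"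
    using assms(1,2) by (rule finite_subset[rotated])
  have row: "(\<Sum>j\<in>V - {i}. g i j)
      = (real (card V) - 1) / 2 + (\<Sum>j\<in>N - {i}. g i j - 1/2) + (\<Sum>j\<in>V - N. phi i j - 1/2)"
    if "i \<in> N" for i
  proof -
    have "V - {i} = (N - {i}) \<union> (V - N)" "(N - {i}) \<inter> (V - N) = {}"
      using that assms(2) by auto
    then have "(\<Sum>j\<in>V - {i}. g i j - 1/2) = (\<Sum>j\<in>N - {i}. g i j - 1/2) + (\<Sum>j\<in>V - N. g i j - 1/2)"
      using assms(1) \<open>finite N\<close> by (simp add: sum.union_disjoint)
    moreover have "(\<Sum>j\<in>V - N. g i j - 1/2) = (\<Sum>j\<in>V - N. phi i j - 1/2)"
      using assms(4) that by simp
    moreover have "real (card (V - {i})) = real (card V) - 1"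
    proof -
      have "i \<in> V"
        using that assms(2) by blast
      moreover have "0 < card V"
        using \<open>i \<in> V\<close> assms(1) card_gt_0_iff by blast
      ultimately have "card (V - {i}) = card V - 1" "1 \<le> card V"
        using assms(1) by (simp_all add: card_Diff_singleton)
      then show ?thesis
        by (simp add: of_nat_diff)
    qed
    ultimately show ?thesis
      by (simp add: sum_subtractf)
  qed
  have "(\<Sum>i\<in>N. \<Sum>j\<in>N - {i}. g i j - 1/2) = 0"
  proof (rule sum_offdiag_antisym[OF \<open>finite N\<close>])
    show "g j i - 1/2 = - (g i j - 1/2)" for i j
      using assms(3)[of i j] by linarith
  qed
  then show ?thesis
    by (simp add: row sum.distrib)
qed

definition bernoulli_weight :: "'b::comm_ring_1 \<Rightarrow> 'a set \<Rightarrow> 'a set \<Rightarrow> 'b" where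
  "bernoulli_weight q V N = q ^ card N * (1 - q) ^ card (V - N)"

lemma prod_if_mem_zero:
  fixes c :: "'b::comm_semiring_1"
  assumes "finite X"
  shows "(\<Prod>x\<in>X. if x \<in> C then 0 else c) = of_bool (X \<inter> C = {}) * c ^ card X"
proof (cases "X \<inter> C = {}")
  case True
  then have "(\<Prod>x\<in>X. if x \<in> C then 0 else c) = (\<Prod>x\<in>X. c)"
    by (intro prod.cong) auto
  then show ?thesis
    using True by simp
next
  case False
  have "(\<Prod>x\<in>X. if x \<in> C then 0 else c) = 0"
    by (rule prod_zero) (use assms False in auto)
  then show ?thesis
    using False by simp
qed

lemma sum_bernoulli_weight_indicator:
  fixes q :: "'b::comm_ring_1"
  assumes "finite V" "A \<subseteq> V" "B \<subseteq> V" "A \<inter> B = {}"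
  shows "(\<Sum>N\<in>Pow V. bernoulli_weight q V N * of_bool (A \<subseteq> N \<and> N \<inter> B = {}))
    = q ^ card A * (1 - q) ^ card B"
proof -
  define f1 where "f1 x = (if x \<in> B then 0 else q)" for x
  define f2 where "f2 x = (if x \<in> A then 0 else 1 - q)" for x
  have "(\<Prod>x\<in>V. f1 x + f2 x) = (\<Sum>N\<in>Pow V. (\<Prod>x\<in>N. f1 x) * (\<Prod>x\<in>V - N. f2 x))"
    using assms(1) by (rule prod_add)
  also have "\<dots> = (\<Sum>N\<in>Pow V. bernoulli_weight q V N * of_bool (A \<subseteq> N \<and> N \<inter> B = {}))"
  proof (rule sum.cong[OF refl])
    fix N assume "N \<in> Pow V"
    then have "finite N" "finite (V - N)" "(V - N) \<inter> A = {} \<longleftrightarrow> A \<subseteq> N"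
      using assms(1,2) finite_subset by auto
    then show "(\<Prod>x\<in>N. f1 x) * (\<Prod>x\<in>V - N. f2 x)
        = bernoulli_weight q V N * of_bool (A \<subseteq> N \<and> N \<inter> B = {})"
      unfolding f1_def f2_def bernoulli_weight_def by (simp add: prod_if_mem_zero)
  qed
  also have "(\<Prod>x\<in>V. f1 x + f2 x) = (\<Prod>x\<in>V. if x \<in> A then q else if x \<in> B then 1 - q else 1)"
    using assms(4) by (intro prod.cong) (auto simp: f1_def f2_def)
  also have "\<dots> = q ^ card A * (1 - q) ^ card B"
  proof -
    let ?h = "\<lambda>x. if x \<in> A then q else if x \<in> B then 1 - q else 1"
    have "(\<Prod>x\<in>V. ?h x) = (\<Prod>x\<in>V - A. ?h x) * (\<Prod>x\<in>A. ?h x)"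
      by (rule prod.subset_diff[OF assms(2,1)])
    also have "(\<Prod>x\<in>V - A. ?h x) = (\<Prod>x\<in>V - A - B. ?h x) * (\<Prod>x\<in>B. ?h x)"
      using assms by (intro prod.subset_diff) auto
    also have "(\<Prod>x\<in>V - A - B. ?h x) = 1"
      by (intro prod.neutral) auto
    also have "(\<Prod>x\<in>B. ?h x) = (1 - q) ^ card B"
      using assms(4) by (subst prod.cong[OF refl, of _ _ "\<lambda>_. 1 - q"]) auto
    also have "(\<Prod>x\<in>A. ?h x) = q ^ card A"
      by (subst prod.cong[OF refl, of _ _ "\<lambda>_. q"]) auto
    finally show ?thesis
      by (simp add: mult.commute)
  qed
  finally show ?thesis ..
qed

lemma sum_bernoulli_weight_card:
  fixes q :: "'b::comm_ring_1"
  assumes "finite V"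
  shows "(\<Sum>N\<in>Pow V. bernoulli_weight q V N * of_nat (card N)) = of_nat (card V) * q"
proof -
  have "(\<Sum>N\<in>Pow V. bernoulli_weight q V N * of_nat (card N))
      = (\<Sum>N\<in>Pow V. \<Sum>i\<in>V. bernoulli_weight q V N * of_bool (i \<in> N))"
  proof (rule sum.cong[OF refl])
    fix N assume "N \<in> Pow V"
    then have "V \<inter> {i. i \<in> N} = N"
      by auto
    then show "bernoulli_weight q V N * of_nat (card N)
        = (\<Sum>i\<in>V. bernoulli_weight q V N * of_bool (i \<in> N))"
      using assms by (simp add: sum_distrib_left[symmetric])
  qed
  also have "\<dots> = (\<Sum>i\<in>V. \<Sum>N\<in>Pow V. bernoulli_weight q V N * of_bool (i \<in> N))"
    by (rule sum.swap)
  also have "\<dots> = (\<Sum>i\<in>V. q)"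
  proof (rule sum.cong[OF refl])
    fix i assume "i \<in> V"
    then show "(\<Sum>N\<in>Pow V. bernoulli_weight q V N * of_bool (i \<in> N)) = q"
      using sum_bernoulli_weight_indicator[OF assms, of "{i}" "{}" q] by simp
  qed
  finally show ?thesis
    by simp
qed

lemma sum_bernoulli_weight_cut:
  fixes q :: "'b::comm_ring_1"
  assumes "finite V"
  shows "(\<Sum>N\<in>Pow V. bernoulli_weight q V N * (\<Sum>i\<in>N. \<Sum>j\<in>V - N. f i j))
    = q * (1 - q) * (\<Sum>i\<in>V. \<Sum>j\<in>V - {i}. f i j)"
proof -
  have cut: "(\<Sum>i\<in>N. \<Sum>j\<in>V - N. f i j)
      = (\<Sum>i\<in>V. \<Sum>j\<in>V - {i}. of_bool (i \<in> N \<and> j \<notin> N) * f i j)"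
    if "N \<subseteq> V" for N
  proof -
    have "V \<inter> {i. i \<in> N} = N"
      using \<open>N \<subseteq> V\<close> by auto
    moreover have "(V - {i}) \<inter> {j. j \<notin> N} = V - N" if "i \<in> N" for i
      using that by auto
    ultimately show ?thesis
      using assms by (simp add: of_bool_conj sum_distrib_left[symmetric] mult.assoc)
  qed
  have "(\<Sum>N\<in>Pow V. bernoulli_weight q V N * (\<Sum>i\<in>N. \<Sum>j\<in>V - N. f i j))
      = (\<Sum>N\<in>Pow V. \<Sum>i\<in>V. \<Sum>j\<in>V - {i}. bernoulli_weight q V N * of_bool (i \<in> N \<and> j \<notin> N) * f i j)"
    by (intro sum.cong refl) (simp add: cut sum_distrib_left mult.assoc)
  also have "\<dots> = (\<Sum>i\<in>V. \<Sum>j\<in>V - {i}. \<Sum>N\<in>Pow V. bernoulli_weight q V N * of_bool (i \<in> N \<and> j \<notin> N) * f i j)"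
    by (subst sum.swap) (simp add: sum.swap[of _ "Pow V"])
  also have "\<dots> = (\<Sum>i\<in>V. \<Sum>j\<in>V - {i}. q * (1 - q) * f i j)"
  proof (intro sum.cong refl)
    fix i j assume "i \<in> V" "j \<in> V - {i}"
    then show "(\<Sum>N\<in>Pow V. bernoulli_weight q V N * of_bool (i \<in> N \<and> j \<notin> N) * f i j)
        = q * (1 - q) * f i j"
      using sum_bernoulli_weight_indicator[OF assms, of "{i}" "{j}" q]
      by (simp add: sum_distrib_right[symmetric])
  qed
  finally show ?thesis
    by (simp add: sum_distrib_left)
qed

lemma PD_eq_cross_scores:
  fixes phi :: "nat \<Rightarrow> nat \<Rightarrow> real"
  assumes "2 \<le> n"
    and "\<And>N i j. N \<subseteq> {1..n} \<Longrightarrow> i \<in> N \<Longrightarrow> j \<in> {1..n} - N \<Longrightarrow> gpair n G N i j = phi i j"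
  shows "PD n q G = q + 2 / (real n * (real n - 1)) * (q * (1 - q))
    * (\<Sum>i\<in>{1..n}. \<Sum>j\<in>{1..n} - {i}. phi i j - 1/2)"
proof -
  define V where "V = {1..n}"
  define K where "K = 2 / (real n * (real n - 1))"
  define cut where "cut N = (\<Sum>i\<in>N. \<Sum>j\<in>V - N. phi i j - 1/2)" for N
  have V: "finite V" "card V = n"
    by (simp_all add: V_def)
  have summand: "q ^ card N * (1 - q) ^ (n - card N) * (\<Sum>i\<in>N. gD n G N i)
      = K * ((real n - 1) / 2 * (bernoulli_weight q V N * real (card N)) + bernoulli_weight q V N * cut N)"
    if "N \<in> Pow V" for N
  proof -
    have "N \<subseteq> V"
      using that by simp
    then have "n - card N = card (V - N)"
      using V by (metis card_Diff_subset finite_subset)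
    have "(\<Sum>i\<in>N. gD n G N i) = K * (\<Sum>i\<in>N. \<Sum>j\<in>V - {i}. gpair n G N i j)"
      unfolding gD_def K_def V_def by (simp add: sum_distrib_left)
    also have "(\<Sum>i\<in>N. \<Sum>j\<in>V - {i}. gpair n G N i j) = real (card N) * (real n - 1) / 2 + cut N"
      using sum_needy_scores_eq[OF V(1) \<open>N \<subseteq> V\<close>, of "gpair n G N" phi]
        gpair_add_swap assms(2) \<open>N \<subseteq> V\<close> V(2)
      unfolding cut_def V_def by simp
    finally show ?thesis
      unfolding bernoulli_weight_def \<open>n - card N = card (V - N)\<close> by (simp add: algebra_simps)
  qed
  have "PD n q G = (\<Sum>N\<in>Pow V.
      K * ((real n - 1) / 2 * (bernoulli_weight q V N * real (card N)) + bernoulli_weight q V N * cut N))"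
    unfolding PD_def V_def[symmetric] by (rule sum.cong[OF refl summand])
  also have "\<dots> = K * ((real n - 1) / 2 * (\<Sum>N\<in>Pow V. bernoulli_weight q V N * real (card N))
      + (\<Sum>N\<in>Pow V. bernoulli_weight q V N * cut N))"
    by (simp only: sum.distrib sum_distrib_left[symmetric])
  also have "\<dots> = K * ((real n - 1) / 2 * (real n * q)
      + q * (1 - q) * (\<Sum>i\<in>V. \<Sum>j\<in>V - {i}. phi i j - 1/2))"
    using sum_bernoulli_weight_card[OF V(1), of q] V(2)
      sum_bernoulli_weight_cut[OF V(1), where q = q and f = "\<lambda>i j. phi i j - 1/2"]
    unfolding cut_def by simp
  also have "\<dots> = q + K * (q * (1 - q)) * (\<Sum>i\<in>V. \<Sum>j\<in>V - {i}. phi i j - 1/2)"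
    using assms(1) unfolding K_def by (simp add: field_simps)
  finally show ?thesis
    unfolding K_def V_def .
qed

section \<open>Balanced pairs in two-class voting profiles\<close>

(* E l x means that voter l puts x in its favoured class. *)
definition backers :: "'a set \<Rightarrow> ('a \<Rightarrow> 'a \<Rightarrow> bool) \<Rightarrow> 'a \<Rightarrow> 'a \<Rightarrow> 'a set" where
  "backers V E i j = {l \<in> V - {i, j}. E l i \<and> \<not> E l j}"

definition supporters :: "'a set \<Rightarrow> ('a \<Rightarrow> 'a \<Rightarrow> bool) \<Rightarrow> 'a \<Rightarrow> 'a set" where
  "supporters V E i = {l \<in> V - {i}. E l i}"

definition balanced :: "'a set \<Rightarrow> ('a \<Rightarrow> 'a \<Rightarrow> bool) \<Rightarrow> 'a \<Rightarrow> 'a \<Rightarrow> bool" where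
  "balanced V E i j \<longleftrightarrow> i \<in> V \<and> j \<in> V \<and> i \<noteq> j
     \<and> 2 * card (backers V E i j) \<le> card V - 2 \<and> 2 * card (backers V E j i) \<le> card V - 2
     \<and> card (backers V E i j) + card (backers V E j i) < card V - 2"

lemma card_backers_add_le:
  assumes "finite V" "i \<in> V" "j \<in> V" "i \<noteq> j"
  shows "card (backers V E i j) + card (backers V E j i) \<le> card V - 2"
proof -
  have "card (backers V E i j) + card (backers V E j i) = card (backers V E i j \<union> backers V E j i)"
    by (rule card_Un_disjoint[symmetric]) (auto simp: backers_def assms(1))
  also have "\<dots> \<le> card (V - {i, j})"
    by (rule card_mono) (auto simp: backers_def assms(1))
  finally show ?thesis
    using assms by (simp add: card_Diff_subset)
qed

lemma card_backers_add_less: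
  assumes "finite V" "i \<in> V" "j \<in> V" "i \<noteq> j" "l \<in> V - {i, j}" "E l i = E l j"
  shows "card (backers V E i j) + card (backers V E j i) < card V - 2"
proof -
  have "card (backers V E i j) + card (backers V E j i) = card (backers V E i j \<union> backers V E j i)"
    by (rule card_Un_disjoint[symmetric]) (auto simp: backers_def assms(1))
  also have "\<dots> < card (V - {i, j})"
  proof (rule psubset_card_mono)
    have "backers V E i j \<union> backers V E j i \<subseteq> V - {i, j}"
      by (auto simp: backers_def)
    moreover have "l \<notin> backers V E i j \<union> backers V E j i"
      using assms(6) by (auto simp: backers_def)
    ultimately show "backers V E i j \<union> backers V E j i \<subset> V - {i, j}"
      using assms(5) by blast
  qed (use assms(1) in simp)
  finally show ?thesis
    using assms(1-4) by (simp add: card_Diff_subset)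
qed

lemma card_backers_le_supporters:
  assumes "finite V" "j \<in> V" "i \<noteq> j"
  shows "card (backers V E i j) + of_bool (E j i) \<le> card (supporters V E i)"
proof -
  have fin: "finite (supporters V E i)"
    using assms(1) by (simp add: supporters_def)
  have sub: "backers V E i j \<subseteq> supporters V E i - {j}"
    by (auto simp: backers_def supporters_def)
  show ?thesis
  proof (cases "E j i")
    case True
    then have "j \<in> supporters V E i"
      using assms by (simp add: supporters_def)
    then have "Suc (card (supporters V E i - {j})) = card (supporters V E i)"
      using fin by (rule card_Suc_Diff1[rotated])
    moreover have "card (backers V E i j) \<le> card (supporters V E i - {j})"
      using sub fin by (simp add: card_mono)
    ultimately show ?thesis
      using True by simp
  next
    case False
    then show ?thesis
      using sub fin by (simp add: card_mono subset_Diff_insert)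
  qed
qed

lemma card_backers_add_supporters:
  assumes "finite V" "i \<in> V" "j \<in> V" "i \<noteq> j"
  shows "card (backers V E i j) + card (supporters V E j) \<le> card V - 2 + of_bool (E i j)"
proof -
  have "card (supporters V E j) \<le> card (supporters V E j - {i}) + of_bool (E i j)"
    using assms(1) by (cases "E i j") (auto simp: supporters_def card_Diff_singleton_if)
  moreover have "card (backers V E i j) + card (supporters V E j - {i})
      = card (backers V E i j \<union> (supporters V E j - {i}))"
    by (rule card_Un_disjoint[symmetric]) (auto simp: backers_def supporters_def assms(1))
  moreover have "\<dots> \<le> card (V - {i, j})"
    by (rule card_mono) (auto simp: backers_def supporters_def assms(1))
  ultimately show ?thesis
    using assms by (simp add: card_Diff_subset)
qed

(* Supporters minus non-supporters of i among the other voters. *)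
definition net_support :: "'a set \<Rightarrow> ('a \<Rightarrow> 'a \<Rightarrow> bool) \<Rightarrow> 'a \<Rightarrow> int" where
  "net_support V E i = 2 * int (card (supporters V E i)) - (int (card V) - 1)"

lemma twice_card_backers_le_if_same_sign:
  assumes "finite V" "symp_on V E" "i \<in> V" "j \<in> V" "i \<noteq> j"
    and "sgn (net_support V E i) = sgn (net_support V E j)"
  shows "2 * card (backers V E i j) \<le> card V - 2"
proof -
  let ?m = "card V" and ?si = "card (supporters V E i)" and ?sj = "card (supporters V E j)"
  have "E i j = E j i"
    using assms(2-4) by (auto dest: symp_onD)
  moreover have "card (backers V E i j) + of_bool (E j i) \<le> ?si"
    using assms(1,4,5) by (rule card_backers_le_supporters)
  moreover have "card (backers V E i j) + ?sj \<le> ?m - 2 + of_bool (E i j)"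
    using assms(1,3-5) by (rule card_backers_add_supporters)
  moreover have "2 \<le> ?m"
    using card_mono[OF assms(1), of "{i, j}"] assms(3-5) by simp
  moreover have "(2 * ?si + 2 \<le> ?m \<and> 2 * ?sj + 2 \<le> ?m) \<or> (2 * ?si + 1 = ?m \<and> 2 * ?sj + 1 = ?m)
      \<or> (?m \<le> 2 * ?si \<and> ?m \<le> 2 * ?sj)"
    using assms(6) unfolding net_support_def sgn_if by (simp split: if_splits; linarith)
  ultimately show ?thesis
    by (cases "E j i") auto
qed

lemma triangle_has_close_pair:
  assumes "finite V" "symp_on V E" "x \<in> V" "y \<in> V" "z \<in> V" "x \<noteq> y" "y \<noteq> z" "x \<noteq> z"
  obtains i j where "i \<in> {x, y, z}" "j \<in> {x, y, z}" "i \<noteq> j"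
    "card (backers V E i j) + card (backers V E j i) < card V - 2"
proof -
  have sym: "E u v = E v u" if "u \<in> V" "v \<in> V" for u v
    using assms(2) that by (auto dest: symp_onD)
  consider "E x y = E x z" | "E y x = E y z" | "E z x = E z y"
    using sym assms(3-5) by blast
  then show ?thesis
  proof cases
    case 1
    then show ?thesis
      using that card_backers_add_less[OF assms(1,4,5,7), of x E] assms by auto
  next
    case 2
    then show ?thesis
      using that card_backers_add_less[OF assms(1,3,5,8), of y E] assms by auto
  next
    case 3
    then show ?thesis
      using that card_backers_add_less[OF assms(1,3,4,6), of z E] assms by auto
  qed
qed

lemma obtain_three_distinct:
  assumes "finite V" "3 \<le> card V"
  obtains x y z where "x \<in> V" "y \<in> V" "z \<in> V" "x \<noteq> y" "y \<noteq> z" "x \<noteq> z"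
proof -
  obtain T where "T \<subseteq> V" "card T = 3"
    using obtain_subset_with_card_n[OF assms(2)] by blast
  then show ?thesis
    using that by (auto simp: card_3_iff)
qed

lemma balanced_pair_if_card_le_4:
  assumes "finite V" "symp_on V E" "3 \<le> card V" "card V \<le> 4"
  shows "\<exists>i j. balanced V E i j"
proof -
  obtain x y z where xyz: "x \<in> V" "y \<in> V" "z \<in> V" "x \<noteq> y" "y \<noteq> z" "x \<noteq> z"
    using obtain_three_distinct[OF assms(1,3)] .
  obtain i j where "i \<in> {x, y, z}" "j \<in> {x, y, z}" "i \<noteq> j"
      "card (backers V E i j) + card (backers V E j i) < card V - 2"
    using triangle_has_close_pair[OF assms(1,2) xyz] .
  then have "balanced V E i j"
    using xyz assms(4) unfolding balanced_def by auto
  then show ?thesis by blast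
qed

lemma balanced_pair_if_odd:
  assumes "finite V" "symp_on V E" "odd (card V)" "4 \<le> card V"
  shows "\<exists>i j. balanced V E i j"
proof -
  let ?cls = "\<lambda>i. sgn (net_support V E i)"
  obtain S where S: "S \<subseteq> V" "card S = 4"
    using obtain_subset_with_card_n[OF assms(4)] by blast
  have "?cls ` S \<subseteq> {-1, 0, 1}"
    by (auto simp: sgn_if)
  then have "card (?cls ` S) < card S"
    using S(2) card_mono[of "{-1, 0, 1}" "?cls ` S"] by simp
  then obtain i j where ij: "i \<in> S" "j \<in> S" "i \<noteq> j" "?cls i = ?cls j"
    using pigeonhole unfolding inj_on_def by blast
  then have "i \<in> V" "j \<in> V"
    using S(1) by auto
  then have "2 * card (backers V E i j) \<le> card V - 2" "2 * card (backers V E j i) \<le> card V - 2"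
    using twice_card_backers_le_if_same_sign[OF assms(1,2)] ij by auto
  moreover have "odd (card V - 2)"
    using assms(3,4) by simp
  then have "2 * card (backers V E i j) \<noteq> card V - 2" "2 * card (backers V E j i) \<noteq> card V - 2"
    by (metis dvd_triv_left)+
  ultimately have "balanced V E i j"
    using \<open>i \<in> V\<close> \<open>j \<in> V\<close> ij(3) unfolding balanced_def by linarith
  then show ?thesis by blast
qed

lemma balanced_pair_if_even:
  assumes "finite V" "symp_on V E" "even (card V)" "5 \<le> card V"
  shows "\<exists>i j. balanced V E i j"
proof -
  let ?pos = "\<lambda>i. 0 < net_support V E i"
  have sgn_net_support: "sgn (net_support V E i) = (if ?pos i then 1 else -1)" for i
  proof -
    have "net_support V E i \<noteq> 0"
      using assms(3) unfolding net_support_def by presburger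
    then show ?thesis
      by (auto simp: sgn_if)
  qed
  obtain S where S: "S \<subseteq> V" "card S = 5"
    using obtain_subset_with_card_n[OF assms(4)] by blast
  have "finite S"
    using S(1) assms(1) by (rule finite_subset)
  then have "card (S \<inter> {x. ?pos x}) + card (S - {x. ?pos x}) = 5"
    using S(2) card_Int_Diff by metis
  then obtain T where T: "T \<subseteq> S" "3 \<le> card T" "\<And>x y. x \<in> T \<Longrightarrow> y \<in> T \<Longrightarrow> ?pos x = ?pos y"
  proof (cases "3 \<le> card (S \<inter> {x. ?pos x})")
    case True
    then show ?thesis
      using that[of "S \<inter> {x. ?pos x}"] by blast
  next
    case False
    then have "3 \<le> card (S - {x. ?pos x})"
      using \<open>card (S \<inter> {x. ?pos x}) + card (S - {x. ?pos x}) = 5\<close> by linarith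
    then show ?thesis
      using that[of "S - {x. ?pos x}"] by blast
  qed
  have "finite T"
    using T(1) \<open>finite S\<close> by (rule finite_subset)
  then obtain x y z where xyz: "x \<in> T" "y \<in> T" "z \<in> T" "x \<noteq> y" "y \<noteq> z" "x \<noteq> z"
    using obtain_three_distinct T(2) by blast
  have TV: "T \<subseteq> V"
    using T(1) S(1) by blast
  obtain i j where ij: "i \<in> {x, y, z}" "j \<in> {x, y, z}" "i \<noteq> j"
      "card (backers V E i j) + card (backers V E j i) < card V - 2"
    using triangle_has_close_pair[OF assms(1,2)] xyz TV by (metis subsetD)
  then have "i \<in> T" "j \<in> T"
    using xyz by auto
  then have same_sign: "sgn (net_support V E i) = sgn (net_support V E j)"
    using T(3)[of i j] by (simp add: sgn_net_support)
  have "i \<in> V" "j \<in> V"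
    using \<open>i \<in> T\<close> \<open>j \<in> T\<close> TV by auto
  then have "balanced V E i j"
    using twice_card_backers_le_if_same_sign[OF assms(1,2) \<open>i \<in> V\<close> \<open>j \<in> V\<close> ij(3) same_sign]
      twice_card_backers_le_if_same_sign[OF assms(1,2) \<open>j \<in> V\<close> \<open>i \<in> V\<close> ij(3)[symmetric] same_sign[symmetric]]
      ij(3,4)
    unfolding balanced_def by blast
  then show ?thesis by blast
qed

lemma exists_balanced_pair:
  assumes "finite V" "symp_on V E" "3 \<le> card V"
  shows "\<exists>i j. balanced V E i j"
proof (cases "card V \<le> 4")
  case True
  then show ?thesis
    using balanced_pair_if_card_le_4 assms by blast
next
  case False
  show ?thesis
  proof (cases "even (card V)")
    case True
    then show ?thesis
      using balanced_pair_if_even[OF assms(1,2)] False by simp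
  next
    case odd: False
    then show ?thesis
      using balanced_pair_if_odd[OF assms(1,2)] False by simp
  qed
qed

lemma sum_duel_backers_pos:
  assumes "finite V" "symp_on V E" "3 \<le> card V"
  shows "0 < (\<Sum>i\<in>V. \<Sum>j\<in>V - {i}.
    duel (card V - 2 - card (backers V E j i)) (card (backers V E j i)) - 1/2)"
proof -
  obtain i0 j0 where bal: "balanced V E i0 j0"
    using exists_balanced_pair[OF assms] by blast
  show ?thesis
  proof (rule sum_offdiag_pos[OF assms(1)])
    fix i j assume "i \<in> V" "j \<in> V" "i \<noteq> j"
    then have "card (backers V E i j) + card (backers V E j i) \<le> card V - 2"
      by (rule card_backers_add_le[OF assms(1)])
    then show "0 \<le> duel (card V - 2 - card (backers V E j i)) (card (backers V E j i)) - 1/2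
        + (duel (card V - 2 - card (backers V E i j)) (card (backers V E i j)) - 1/2)"
      using duel_pair_ge by fastforce
  next
    show "i0 \<in> V" "j0 \<in> V" "i0 \<noteq> j0"
      using bal by (simp_all add: balanced_def)
    show "0 < duel (card V - 2 - card (backers V E j0 i0)) (card (backers V E j0 i0)) - 1/2
        + (duel (card V - 2 - card (backers V E i0 j0)) (card (backers V E i0 j0)) - 1/2)"
      using bal duel_pair_gt unfolding balanced_def by fastforce
  qed
qed

section \<open>Networks lacking a relation type\<close>

definition rank :: "relation \<Rightarrow> nat" where
  "rank r = (case r of Friends \<Rightarrow> 0 | Impartial \<Rightarrow> 1 | Enemies \<Rightarrow> 2)"

lemma lev_eq_rank:
  assumes "x \<in> {1..n}" "x \<noteq> l"
  shows "lev n G N l x = 2 * rank (G l x) + (if x \<in> N then 1 else 2)"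
  using assms by (cases "G l x") (auto simp: lev_def friends_def impartials_def enemies_def rank_def)

lemma votes_needy_nonneedy:
  assumes "i \<in> N" "j \<notin> N" "i \<in> {1..n}" "j \<in> {1..n}"
  shows "votes n G N j i = card {l \<in> {1..n} - {i, j}. rank (G l j) < rank (G l i)}"
    and "votes n G N i j = n - 2 - votes n G N j i"
proof -
  have lev: "lev n G N l i = 2 * rank (G l i) + 1" "lev n G N l j = 2 * rank (G l j) + 2"
    if "l \<in> {1..n} - {i, j}" for l
    using that assms lev_eq_rank[of i n l G N] lev_eq_rank[of j n l G N] by auto
  have j_wins: "{l \<in> {1..n}. l \<noteq> j \<and> l \<noteq> i \<and> lev n G N l j < lev n G N l i}
      = {l \<in> {1..n} - {i, j}. rank (G l j) < rank (G l i)}"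
    using lev by auto
  have i_wins: "{l \<in> {1..n}. l \<noteq> i \<and> l \<noteq> j \<and> lev n G N l i < lev n G N l j}
      = ({1..n} - {i, j}) - {l \<in> {1..n} - {i, j}. rank (G l j) < rank (G l i)}"
    using lev by auto
  show j_votes: "votes n G N j i = card {l \<in> {1..n} - {i, j}. rank (G l j) < rank (G l i)}"
    unfolding votes_def j_wins ..
  have "i \<noteq> j"
    using assms(1,2) by blast
  then show "votes n G N i j = n - 2 - votes n G N j i"
    unfolding votes_def[of n G N i j] i_wins j_votes
    using assms(3,4) by (subst card_Diff_subset) (auto simp: card_Diff_subset)
qed

(* The more favourable of the two relation types that remain when t is absent. *)
definition top_relation :: "relation \<Rightarrow> relation" where
  "top_relation t = (if t = Friends then Impartial else Friends)"

lemma rank_less_iff_top_relation: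
  "r \<noteq> t \<Longrightarrow> s \<noteq> t \<Longrightarrow> rank s < rank r \<longleftrightarrow> s = top_relation t \<and> r \<noteq> top_relation t"
  by (cases r; cases s; cases t) (simp_all add: rank_def top_relation_def)

lemma gpair_needy_nonneedy:
  assumes missing: "\<forall>l\<in>{1..n}. \<forall>x\<in>{1..n}. l \<noteq> x \<longrightarrow> G l x \<noteq> t"
    and E: "E = (\<lambda>l x. G l x = top_relation t)"
    and "i \<in> N" "j \<notin> N" "i \<in> {1..n}" "j \<in> {1..n}"
  shows "gpair n G N i j = duel (n - 2 - card (backers {1..n} E j i)) (card (backers {1..n} E j i))"
proof -
  have "rank (G l j) < rank (G l i) \<longleftrightarrow> E l j \<and> \<not> E l i" if "l \<in> {1..n} - {i, j}" for l
    using rank_less_iff_top_relation[of "G l i" t "G l j"] missing that assms(5,6) unfolding E by auto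
  then have "{l \<in> {1..n} - {i, j}. rank (G l j) < rank (G l i)} = backers {1..n} E j i"
    unfolding backers_def by blast
  then show ?thesis
    using votes_needy_nonneedy[OF assms(3-6)] by (simp add: gpair_eq_duel)
qed

lemma relation_missing:
  assumes "(\<Union>i\<in>{1..n}. enemies n G i) = {} \<or> (\<Union>i\<in>{1..n}. friends n G i) = {}
    \<or> (\<Union>i\<in>{1..n}. impartials n G i) = {}"
  shows "\<exists>t. \<forall>l\<in>{1..n}. \<forall>x\<in>{1..n}. l \<noteq> x \<longrightarrow> G l x \<noteq> t"
proof -
  have absent: "\<forall>l\<in>{1..n}. \<forall>x\<in>{1..n}. l \<noteq> x \<longrightarrow> G l x \<noteq> r"
    if "(\<Union>i\<in>{1..n}. {k \<in> {1..n}. k \<noteq> i \<and> G i k = r}) = {}" for r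
    using that by blast
  show ?thesis
    using assms absent unfolding enemies_def friends_def impartials_def by blast
qed

theorem proposition3:
  fixes n :: nat and q :: real and G :: "nat \<Rightarrow> nat \<Rightarrow> relation"
  assumes "n \<ge> 3" and "0 < q" and "q < 1"
    and "network n G"
    and "(\<Union>i\<in>{1..n}. enemies n G i) = {} \<or> (\<Union>i\<in>{1..n}. friends n G i) = {}
         \<or> (\<Union>i\<in>{1..n}. impartials n G i) = {}"
  shows "PD n q G > q"
proof -
  obtain t where missing: "\<forall>l\<in>{1..n}. \<forall>x\<in>{1..n}. l \<noteq> x \<longrightarrow> G l x \<noteq> t"
    using relation_missing[OF assms(5)] by blast
  define E where "E = (\<lambda>l x. G l x = top_relation t)"
  define T where "T = (\<Sum>i\<in>{1..n}. \<Sum>j\<in>{1..n} - {i}.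
    duel (n - 2 - card (backers {1..n} E j i)) (card (backers {1..n} E j i)) - 1/2)"
  have "symp_on {1..n} E"
    using assms(4) unfolding symp_on_def network_def E_def by metis
  then have "0 < T"
    using sum_duel_backers_pos[of "{1..n}" E] assms(1) unfolding T_def by simp
  have scores: "gpair n G N i j = duel (n - 2 - card (backers {1..n} E j i)) (card (backers {1..n} E j i))"
    if "N \<subseteq> {1..n}" "i \<in> N" "j \<in> {1..n} - N" for N i j
    using that by (intro gpair_needy_nonneedy[OF missing E_def]) auto
  have "PD n q G = q + 2 / (real n * (real n - 1)) * (q * (1 - q)) * T"
    unfolding T_def by (rule PD_eq_cross_scores[OF _ scores]) (use assms(1) in simp_all)
  moreover have "0 < 2 / (real n * (real n - 1)) * (q * (1 - q)) * T"
    using assms(1-3) \<open>0 < T\<close> by simp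
  ultimately show ?thesis
    by simp
qed

end
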